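(* Under the setting below, for every $k\in\mathbb{N}_0$: $Z_k(0)<0$ and $\lim_{\tau\to\tau^{*-}}Z_k(\tau)=-\infty$. Consequently, if $Z_k$ has finitely many zeros in $[0,\tau^* )$ and changes sign at each of them, then the number of zeros is even. Moreover, $Z_{k+1}(\tau)<Z_k(\tau)$ for all $\tau\in[0,\tau^* )$, and if $Z_k$ has no root in $[0,\tau^* )$ then $Z_j$ has no root in $[0,\tau^* )$ for every $j>k$.
   Context: Let $\delta>0$ and $\beta:[0,+\infty)\to(0,+\infty)$ continuously differentiable, strictly decreasing, with $\beta'(s)<0$ for $s>0$, $\lim_{S\to+\infty}\beta(S)=0$, and $\delta<\beta(0)$. Let $\bar\tau:=\frac1\delta\ln\!\big(\frac{2\beta(0)}{\delta+\beta(0)}\big)$, $\beta^{-1}$ the inverse of $\beta$ on $(0,\beta(0)]$, and for $\tau\in[0,\bar\tau)$: $S^*(\tau)=\beta^{-1}\!\big(\frac{\delta}{2e^{-\delta\tau}-1}\big)$, $N^*(\tau)=(2e^{-\delta\tau}-1)e^{\delta\tau}S^*(\tau)$, $A(\tau)=\delta+\beta(S^*(\tau))$, $B(\tau)=[2\beta(S^*(\tau))+N^*(\tau)\beta'(S^*(\tau))]e^{-\delta\tau}$. Let $\chi(y)=y\beta'(y)$ and assume (H$_1$) $\chi$ is decreasing on $[0,\beta^{-1}(\delta)]$ and (H$_2$) $\chi(\beta^{-1}(\delta))<-4\delta$. Then there is a unique $\tau^*\in(0,\bar\tau)$ such that $A(\tau)<|B(\tau)|$ (with $B(\tau)<0$)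 exactly for $\tau\in[0,\tau^* )$. For $k\in\mathbb{N}_0$ (nonnegative integers) and $\tau\in[0,\tau^* )$ define $\tau_k(\tau)=\dfrac{\arccos(A(\tau)/B(\tau))+2k\pi}{\sqrt{B(\tau)^2-A(\tau)^2}}$ and $Z_k(\tau)=\tau-\tau_k(\tau)$, with $\arccos$ valued in $[0,\pi]$. *)

theory Defs
  imports "HOL-Analysis.Analysis"
begin

definition taubar :: "(real \<Rightarrow> real) \<Rightarrow> real \<Rightarrow> real" where
  "taubar \<beta> \<delta> = (1/\<delta>) * ln (2 * \<beta> 0 / (\<delta> + \<beta> 0))"

definition betainv :: "(real \<Rightarrow> real) \<Rightarrow> real \<Rightarrow> real" where
  "betainv \<beta> y = the_inv_into {0..} \<beta> y"

definition Sstar :: "(real \<Rightarrow> real) \<Rightarrow> real \<Rightarrow> real \<Rightarrow> real" where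
  "Sstar \<beta> \<delta> \<tau> = betainv \<beta> (\<delta> / (2 * exp (-\<delta>*\<tau>) - 1))"

definition Nstar :: "(real \<Rightarrow> real) \<Rightarrow> real \<Rightarrow> real \<Rightarrow> real" where
  "Nstar \<beta> \<delta> \<tau> = (2 * exp (-\<delta>*\<tau>) - 1) * exp (\<delta>*\<tau>) * Sstar \<beta> \<delta> \<tau>"

definition Acoef :: "(real \<Rightarrow> real) \<Rightarrow> real \<Rightarrow> real \<Rightarrow> real" where
  "Acoef \<beta> \<delta> \<tau> = \<delta> + \<beta> (Sstar \<beta> \<delta> \<tau>)"

definition Bcoef :: "(real \<Rightarrow> real) \<Rightarrow> (real \<Rightarrow> real) \<Rightarrow> real \<Rightarrow> real \<Rightarrow> real" where
  "Bcoef \<beta> \<beta>' \<delta> \<tau> =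
     (2 * \<beta> (Sstar \<beta> \<delta> \<tau>) + Nstar \<beta> \<delta> \<tau> * \<beta>' (Sstar \<beta> \<delta> \<tau>)) * exp (-\<delta>*\<tau>)"

definition tauk :: "(real \<Rightarrow> real) \<Rightarrow> (real \<Rightarrow> real) \<Rightarrow> real \<Rightarrow> nat \<Rightarrow> real \<Rightarrow> real" where
  "tauk \<beta> \<beta>' \<delta> k \<tau> =
     (arccos (Acoef \<beta> \<delta> \<tau> / Bcoef \<beta> \<beta>' \<delta> \<tau>) + 2 * real k * pi)
       / sqrt ((Bcoef \<beta> \<beta>' \<delta> \<tau>)\<^sup>2 - (Acoef \<beta> \<delta> \<tau>)\<^sup>2)"

definition Zk :: "(real \<Rightarrow> real) \<Rightarrow> (real \<Rightarrow> real) \<Rightarrow> real \<Rightarrow> nat \<Rightarrow> real \<Rightarrow> real" where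
  "Zk \<beta> \<beta>' \<delta> k \<tau> = \<tau> - tauk \<beta> \<beta>' \<delta> k \<tau>"

definition changes_sign_at :: "(real \<Rightarrow> real) \<Rightarrow> real \<Rightarrow> bool" where
  "changes_sign_at f z \<longleftrightarrow> (\<exists>e>0.
     ((\<forall>t\<in>{z-e<..<z}. f t < 0) \<and> (\<forall>t\<in>{z<..<z+e}. f t > 0)) \<or>
     ((\<forall>t\<in>{z-e<..<z}. f t > 0) \<and> (\<forall>t\<in>{z<..<z+e}. f t < 0)))"

end

theory Submission
  imports Defs
begin

(* Write A = Acoef, B = Bcoef and D = B^2 - A^2, so that
   tau_k = (arccos (A/B) + 2 k pi) / sqrt D  and  Z_k(t) = t - tau_k(t).
   On [0, tau_s) we have 0 < A < -B, hence A/B lies in (-1,0), arccos (A/B) > pi/2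
   and D > 0.  This gives at once Z_k(0) < 0 and the strict monotonicity of Z_k in k.
   At tau_s the inequality A < |B| with B < 0 fails while A, B are continuous there,
   which forces D -> 0+ as t -> tau_s from the left; then tau_k -> +infinity and
   Z_k -> -infinity.  The parity statement is a purely topological fact: a continuous
   function on [0,T) that is negative at 0 and near T, and changes sign at each of its
   finitely many zeros, has an even number of zeros.
   The file first proves this parity fact, then the properties of the delay functions
   for arbitrary coefficient functions A, B, then continuity of the concrete
   coefficients (via continuity of the inverse of beta), and finally lemma5p3.
   The hypotheses on beta', (H1) and (H2) serve in the paper only to show that tau_s
   exists. *)

section \<open>Counting sign changes\<close>

lemma sign_constant_without_zeros:
  fixes f :: "real \<Rightarrow> real"
  assumes cont: "continuous_on {a..b} f" and ab: "a \<le> b" and nz: "\<forall>t\<in>{a..b}. f t \<noteq> 0"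
  shows "f a < 0 \<longleftrightarrow> f b < 0"
proof -
  have False if "f a < 0" "\<not> f b < 0"
    using IVT'[of f a 0 b] that ab cont nz by force
  moreover have False if "\<not> f a < 0" "f b < 0"
    using IVT2'[of f b 0 a] that ab cont nz by force
  ultimately show ?thesis by blast
qed

lemma sign_flips_across_zero:
  fixes f :: "real \<Rightarrow> real"
  assumes cont: "continuous_on {z..a} f" and sc: "changes_sign_at f z"
    and lo: "lo < z" and za: "z < a" and nz: "\<forall>t\<in>{z<..a}. f t \<noteq> 0"
  shows "\<exists>b\<in>{lo<..<z}. f b \<noteq> 0 \<and> (f a < 0 \<longleftrightarrow> \<not> f b < 0)"
proof -
  obtain e where e: "e > 0" and
    sg: "((\<forall>t\<in>{z-e<..<z}. f t < 0) \<and> (\<forall>t\<in>{z<..<z+e}. f t > 0)) \<or>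
         ((\<forall>t\<in>{z-e<..<z}. f t > 0) \<and> (\<forall>t\<in>{z<..<z+e}. f t < 0))"
    using sc unfolding changes_sign_at_def by blast
  define b where "b = (max lo (z - e) + z) / 2"
  define c where "c = (z + min (z + e) a) / 2"
  have b: "b \<in> {lo<..<z}" "b \<in> {z-e<..<z}" using lo e unfolding b_def by auto
  have c: "c \<in> {z<..<z+e}" "c \<le> a" using za e unfolding c_def by auto
  have opposite: "f b \<noteq> 0" "f c < 0 \<longleftrightarrow> \<not> f b < 0" using sg b c by force+
  have "continuous_on {c..a} f" using cont by (rule continuous_on_subset) (use c in auto)
  then have "f c < 0 \<longleftrightarrow> f a < 0"
    using sign_constant_without_zeros[of c a f] c nz by auto
  then show ?thesis using b opposite by auto
qed

lemma sign_by_parity_of_zeros: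
  fixes f :: "real \<Rightarrow> real"
  assumes cont: "continuous_on {0..<T} f" and f0: "f 0 < 0"
    and fin: "finite {t\<in>{0..<T}. f t = 0}"
    and sc: "\<forall>z\<in>{t\<in>{0..<T}. f t = 0}. changes_sign_at f z"
    and a: "a \<in> {0..<T}" "f a \<noteq> 0"
  shows "f a < 0 \<longleftrightarrow> even (card {z\<in>{t\<in>{0..<T}. f t = 0}. z < a})"
proof -
  define Zs where "Zs = {t\<in>{0..<T}. f t = 0}"
  have finZ: "finite Zs" using fin by (simp add: Zs_def)
  have "f a < 0 \<longleftrightarrow> even n" if "a \<in> {0..<T}" "f a \<noteq> 0" "card {z\<in>Zs. z < a} = n" for n a
    using that
  proof (induction n arbitrary: a)
    case 0
    have "finite {z\<in>Zs. z < a}" using finZ by simp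
    then have "{z\<in>Zs. z < a} = {}" using "0.prems"(3) by simp
    then have "\<forall>t\<in>{0..a}. f t \<noteq> 0" using "0.prems" by (fastforce simp: Zs_def)
    moreover have "continuous_on {0..a} f"
      using cont by (rule continuous_on_subset) (use "0.prems" in auto)
    ultimately show ?case using sign_constant_without_zeros[of 0 a f] "0.prems" f0 by auto
  next
    case (Suc n)
    define Q where "Q = {z\<in>Zs. z < a}"
    have finQ: "finite Q" using finZ by (simp add: Q_def)
    have "Q \<noteq> {}" using Suc.prems(3) unfolding Q_def by (metis card.empty nat.simps(3))
    define z where "z = Max Q"
    have zQ: "z \<in> Q" and zmax: "\<forall>w\<in>Q. w \<le> z" using finQ \<open>Q \<noteq> {}\<close> by (simp_all add: z_def)
    have za: "z < a" and zZ: "z \<in> Zs" using zQ by (auto simp: Q_def)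
    have z0: "0 < z" using zZ f0 by (cases "z = 0") (auto simp: Zs_def)
    define W where "W = {w\<in>Zs. w < z}"
    define lo where "lo = Max (insert 0 W)"
    have finW: "finite W" using finZ by (simp add: W_def)
    have "lo \<in> insert 0 W" unfolding lo_def by (rule Max_in) (use finW in auto)
    then have lo: "lo < z" using z0 by (auto simp: W_def)
    have "continuous_on {z..a} f" using cont by (rule continuous_on_subset) (use z0 Suc.prems in auto)
    moreover have "\<forall>t\<in>{z<..a}. f t \<noteq> 0"
    proof
      fix t assume t: "t \<in> {z<..a}"
      show "f t \<noteq> 0"
      proof
        assume "f t = 0"
        then have "t \<in> Q" using t z0 Suc.prems(1,2) by (cases "t = a") (auto simp: Q_def Zs_def)
        then show False using zmax t by force
      qed
    qed
    \<comment> \<open>a point b between lo and z sees exactly the n zeros before z\<close>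
    ultimately obtain b where b: "b \<in> {lo<..<z}" "f b \<noteq> 0" "f a < 0 \<longleftrightarrow> \<not> f b < 0"
      using sign_flips_across_zero[of z a f lo] sc zZ lo za unfolding Zs_def by blast
    have lo_bounds: "\<forall>w\<in>W. w \<le> lo" "0 \<le> lo" using finW by (simp_all add: lo_def)
    then have below_b: "{w\<in>Zs. w < b} = W" using b(1) by (auto simp: W_def)
    have b_range: "b \<in> {0..<T}" using lo_bounds b(1) za Suc.prems(1) by auto
    have "Q = insert z W" "z \<notin> W" using zmax za zQ by (auto simp: Q_def W_def)
    then have "card W = n" using Suc.prems(3) finW unfolding Q_def[symmetric] by simp
    then have "f b < 0 \<longleftrightarrow> even n" using Suc.IH[OF b_range b(2)] below_b by simp
    then show ?case using b(3) by simp
  qed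
  then show ?thesis using a unfolding Zs_def by blast
qed

lemma even_number_of_sign_changes:
  fixes f :: "real \<Rightarrow> real"
  assumes cont: "continuous_on {0..<T} f" and f0: "f 0 < 0"
    and near_T: "eventually (\<lambda>t. f t < 0) (at_left T)"
    and fin: "finite {t\<in>{0..<T}. f t = 0}"
    and sc: "\<forall>z\<in>{t\<in>{0..<T}. f t = 0}. changes_sign_at f z"
  shows "even (card {t\<in>{0..<T}. f t = 0})"
proof -
  define Zs where "Zs = {t\<in>{0..<T}. f t = 0}"
  define M where "M = Max (insert 0 Zs)"
  have finZ: "finite Zs" using fin by (simp add: Zs_def)
  show ?thesis
  proof (cases "0 < T")
    case False
    then show ?thesis by simp
  next
    case True
    have M: "\<forall>w\<in>Zs. w \<le> M" "0 \<le> M" using finZ by (simp_all add: M_def)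
    have "M \<in> insert 0 Zs" unfolding M_def using finZ by (intro Max_in) auto
    then have "M < T" using True by (auto simp: Zs_def)
    have "eventually (\<lambda>t. f t < 0 \<and> t \<in> {M<..<T}) (at_left T)"
      using near_T eventually_at_left_real[OF \<open>M < T\<close>] by (rule eventually_conj)
    then obtain a where a: "f a < 0" "a \<in> {M<..<T}"
      using eventually_happens'[OF trivial_limit_at_left_real] by blast
    have "{z\<in>Zs. z < a} = Zs" using M a by force
    then show ?thesis
      using sign_by_parity_of_zeros[OF cont f0 fin sc, of a] a M by (simp add: Zs_def)
  qed
qed

section \<open>Critical delays for general coefficient functions\<close>

text \<open>The k-th critical delay of the characteristic equation lambda + A = B e^(-lambda tau),
  for coefficients A, B depending on the parameter t, and the gap between the parameter
  and that delay.\<close>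
definition delay_root :: "(real \<Rightarrow> real) \<Rightarrow> (real \<Rightarrow> real) \<Rightarrow> nat \<Rightarrow> real \<Rightarrow> real" where
  "delay_root A B k t = (arccos (A t / B t) + 2 * real k * pi) / sqrt ((B t)\<^sup>2 - (A t)\<^sup>2)"

definition delay_gap :: "(real \<Rightarrow> real) \<Rightarrow> (real \<Rightarrow> real) \<Rightarrow> nat \<Rightarrow> real \<Rightarrow> real" where
  "delay_gap A B k t = t - delay_root A B k t"

lemma Zk_eq_delay_gap: "Zk \<beta> \<beta>' \<delta> k = delay_gap (Acoef \<beta> \<delta>) (Bcoef \<beta> \<beta>' \<delta>) k"
  by (simp add: fun_eq_iff Zk_def tauk_def delay_gap_def delay_root_def)

lemma discriminant_pos:
  fixes a b :: real
  assumes "0 < a" "a < - b"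
  shows "0 < b\<^sup>2 - a\<^sup>2"
proof -
  have "a * a < (- b) * (- b)" using assms by (intro mult_strict_mono) auto
  then show ?thesis by (simp add: power2_eq_square)
qed

lemma arccos_ratio_gt_half_pi:
  fixes a b :: real
  assumes "0 < a" "a < - b"
  shows "pi / 2 < arccos (a / b)"
proof -
  have "-1 < a / b" "a / b < 0" using assms by (simp_all add: neg_less_divide_eq divide_pos_neg)
  then show ?thesis using arccos_less_arccos[of "a / b" 0] by simp
qed

lemma delay_root_lower_bound:
  assumes "0 < A t" "A t < - B t"
  shows "pi / 2 / sqrt ((B t)\<^sup>2 - (A t)\<^sup>2) \<le> delay_root A B k t"
  unfolding delay_root_def
proof (rule divide_right_mono)
  show "pi / 2 \<le> arccos (A t / B t) + 2 * real k * pi"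
    using arccos_ratio_gt_half_pi[OF assms] by (simp add: add_increasing2)
qed (use discriminant_pos[OF assms] in simp)

lemma delay_root_strict_mono:
  assumes "0 < A t" "A t < - B t" "k < j"
  shows "delay_root A B k t < delay_root A B j t"
  unfolding delay_root_def
  by (rule divide_strict_right_mono) (use assms discriminant_pos[OF assms(1,2)] in auto)

lemma delay_gap_continuous:
  assumes "continuous_on S A" "continuous_on S B" "\<forall>t\<in>S. 0 < A t \<and> A t < - B t"
  shows "continuous_on S (delay_gap A B k)"
proof -
  have ratio: "\<forall>t\<in>S. B t \<noteq> 0 \<and> - 1 \<le> A t / B t \<and> A t / B t \<le> 1"
    using assms(3) by (auto simp: divide_le_eq le_divide_eq)
  have "\<forall>t\<in>S. sqrt ((B t)\<^sup>2 - (A t)\<^sup>2) \<noteq> 0"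
    using assms(3) discriminant_pos by fastforce
  then show ?thesis
    unfolding delay_gap_def[abs_def] delay_root_def
    using assms(1,2) ratio by (intro continuous_intros continuous_on_arccos) auto
qed

lemma delay_gap_tends_to_minus_infinity:
  assumes regime: "eventually (\<lambda>t. 0 < A t \<and> A t < - B t) (at_left T)"
    and D0: "((\<lambda>t. (B t)\<^sup>2 - (A t)\<^sup>2) \<longlongrightarrow> 0) (at_left T)"
  shows "filterlim (delay_gap A B k) at_bot (at_left T)"
proof -
  have sqrt0: "((\<lambda>t. sqrt ((B t)\<^sup>2 - (A t)\<^sup>2)) \<longlongrightarrow> 0) (at_left T)"
    using tendsto_real_sqrt[OF D0] by simp
  have "eventually (\<lambda>t. 0 < sqrt ((B t)\<^sup>2 - (A t)\<^sup>2)) (at_left T)"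
    using regime by eventually_elim (blast intro: real_sqrt_gt_zero discriminant_pos)
  with sqrt0 have inv: "filterlim (\<lambda>t. inverse (sqrt ((B t)\<^sup>2 - (A t)\<^sup>2))) at_top (at_left T)"
    by (rule filterlim_inverse_at_top)
  have "filterlim (\<lambda>t. pi / 2 / sqrt ((B t)\<^sup>2 - (A t)\<^sup>2)) at_top (at_left T)"
    unfolding divide_inverse[of "pi / 2"]
    by (rule filterlim_tendsto_pos_mult_at_top[OF tendsto_const _ inv]) simp
  moreover have "eventually (\<lambda>t. pi / 2 / sqrt ((B t)\<^sup>2 - (A t)\<^sup>2) \<le> delay_root A B k t)
      (at_left T)"
    using regime by eventually_elim (blast intro: delay_root_lower_bound)
  ultimately have "filterlim (delay_root A B k) at_top (at_left T)"
    by (rule filterlim_at_top_mono)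
  then have "filterlim (\<lambda>t. - delay_root A B k t) at_bot (at_left T)"
    by (simp add: filterlim_uminus_at_bot)
  then have "filterlim (\<lambda>t. t + - delay_root A B k t) at_bot (at_left T)"
    by (rule filterlim_tendsto_add_at_bot_iff[OF tendsto_ident_at, THEN iffD2])
  then show ?thesis by (simp add: delay_gap_def[abs_def])
qed

lemma discriminant_vanishes_at_exit:
  fixes A B :: "real \<Rightarrow> real" and T :: real
  assumes cA: "isCont A T" and cB: "isCont B T"
    and regime: "eventually (\<lambda>t. 0 < A t \<and> A t < - B t) (at_left T)"
    and exit: "\<not> (A T < \<bar>B T\<bar> \<and> B T < 0)"
  shows "((\<lambda>t. (B t)\<^sup>2 - (A t)\<^sup>2) \<longlongrightarrow> 0) (at_left T)"
proof -
  have lA: "(A \<longlongrightarrow> A T) (at_left T)" and lB: "(B \<longlongrightarrow> B T) (at_left T)"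
    using continuous_at_imp_continuous_at_within[OF cA] continuous_at_imp_continuous_at_within[OF cB]
    by (simp_all add: continuous_within)
  have lim: "((\<lambda>t. (B t)\<^sup>2 - (A t)\<^sup>2) \<longlongrightarrow> (B T)\<^sup>2 - (A T)\<^sup>2) (at_left T)"
    by (intro tendsto_diff tendsto_power lA lB)
  have "eventually (\<lambda>t. 0 \<le> (B t)\<^sup>2 - (A t)\<^sup>2) (at_left T)"
    using regime by eventually_elim (blast intro: less_imp_le discriminant_pos)
  then have "0 \<le> (B T)\<^sup>2 - (A T)\<^sup>2" by (rule tendsto_lowerbound[OF lim]) simp
  moreover have "B T \<le> 0"
    by (rule tendsto_upperbound[OF lB])
      (use regime in \<open>auto elim: eventually_mono\<close>)
  then have "(B T)\<^sup>2 - (A T)\<^sup>2 \<le> 0"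
  proof (cases "B T < 0")
    case True
    then have "(- B T) * (- B T) \<le> A T * A T" using exit by (intro mult_mono) auto
    then show ?thesis by (simp add: power2_eq_square)
  qed simp
  ultimately show ?thesis using lim by simp
qed

lemma delay_gap_properties:
  assumes T: "0 < T"
    and cA: "continuous_on {0..<T} A" and cB: "continuous_on {0..<T} B"
    and regime: "\<forall>t\<in>{0..<T}. 0 < A t \<and> A t < - B t"
    and D0: "((\<lambda>t. (B t)\<^sup>2 - (A t)\<^sup>2) \<longlongrightarrow> 0) (at_left T)"
  shows "delay_gap A B k 0 < 0"
    and "filterlim (delay_gap A B k) at_bot (at_left T)"
    and "finite {t\<in>{0..<T}. delay_gap A B k t = 0}
         \<and> (\<forall>z\<in>{t\<in>{0..<T}. delay_gap A B k t = 0}. changes_sign_at (delay_gap A B k) z)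
         \<Longrightarrow> even (card {t\<in>{0..<T}. delay_gap A B k t = 0})"
    and "t \<in> {0..<T} \<Longrightarrow> delay_gap A B (Suc k) t < delay_gap A B k t"
    and "\<forall>t\<in>{0..<T}. delay_gap A B k t \<noteq> 0 \<Longrightarrow> k < j \<Longrightarrow> t \<in> {0..<T}
         \<Longrightarrow> delay_gap A B j t \<noteq> 0"
proof -
  have ev: "eventually (\<lambda>t. 0 < A t \<and> A t < - B t) (at_left T)"
    using eventually_at_left_real[OF T] by eventually_elim (use regime in auto)
  have cZ: "continuous_on {0..<T} (delay_gap A B i)" for i
    using cA cB regime by (rule delay_gap_continuous)
  have Z0: "delay_gap A B i 0 < 0" for i
  proof -
    have at0: "0 < A 0" "A 0 < - B 0" using regime T by auto
    then have "0 < pi / 2 / sqrt ((B 0)\<^sup>2 - (A 0)\<^sup>2)" using discriminant_pos by simp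
    then show ?thesis using delay_root_lower_bound[of A 0 B i] at0 by (simp add: delay_gap_def)
  qed
  show "delay_gap A B k 0 < 0" by (rule Z0)
  show lim: "filterlim (delay_gap A B k) at_bot (at_left T)"
    using ev D0 by (rule delay_gap_tends_to_minus_infinity)
  then have "eventually (\<lambda>t. delay_gap A B k t < 0) (at_left T)"
    by (auto simp: filterlim_at_bot_dense)
  then show "finite {t\<in>{0..<T}. delay_gap A B k t = 0}
         \<and> (\<forall>z\<in>{t\<in>{0..<T}. delay_gap A B k t = 0}. changes_sign_at (delay_gap A B k) z)
         \<Longrightarrow> even (card {t\<in>{0..<T}. delay_gap A B k t = 0})"
    using even_number_of_sign_changes[OF cZ Z0] by blast
  show "t \<in> {0..<T} \<Longrightarrow> delay_gap A B (Suc k) t < delay_gap A B k t"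
    using regime delay_root_strict_mono[of A t B k "Suc k"] by (auto simp: delay_gap_def)
  assume nz: "\<forall>t\<in>{0..<T}. delay_gap A B k t \<noteq> 0" and kj: "k < j" and t: "t \<in> {0..<T}"
  have "continuous_on {0..t} (delay_gap A B k)" using cZ by (rule continuous_on_subset) (use t in auto)
  then have "delay_gap A B k t < 0"
    using sign_constant_without_zeros[of 0 t "delay_gap A B k"] nz t Z0[of k] by auto
  moreover have "delay_gap A B j t < delay_gap A B k t"
    using regime t delay_root_strict_mono[of A t B k j] kj by (auto simp: delay_gap_def)
  ultimately show "delay_gap A B j t \<noteq> 0" by simp
qed

section \<open>The concrete coefficients\<close>

lemma decreasing_levels_attained:
  fixes \<beta> :: "real \<Rightarrow> real"
  assumes cont: "continuous_on {0..} \<beta>" and lim: "(\<beta> \<longlongrightarrow> 0) at_top" and c: "0 < c"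
  obtains M where "0 \<le> M" "{c..\<beta> 0} \<subseteq> \<beta> ` {0..M}"
proof -
  obtain M0 where M0: "\<forall>x\<ge>M0. \<beta> x < c"
    using order_tendstoD(2)[OF lim c] unfolding eventually_at_top_linorder by blast
  define M where "M = max M0 0"
  have M: "0 \<le> M" "\<beta> M < c" using M0 by (simp_all add: M_def)
  have "continuous_on {0..M} \<beta>" using cont by (rule continuous_on_subset) auto
  then have "v \<in> \<beta> ` {0..M}" if v: "v \<in> {c..\<beta> 0}" for v
  proof -
    obtain x where "0 \<le> x" "x \<le> M" "\<beta> x = v"
      using IVT2'[of \<beta> M v 0] v M \<open>continuous_on {0..M} \<beta>\<close> by auto
    then show ?thesis by force
  qed
  then show ?thesis using that M(1) by blast
qed

lemma betainv_on_levels: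
  fixes \<beta> :: "real \<Rightarrow> real"
  assumes cont: "continuous_on {0..} \<beta>" and lim: "(\<beta> \<longlongrightarrow> 0) at_top" and c: "0 < c"
    and dec: "\<forall>s t. 0 \<le> s \<and> s < t \<longrightarrow> \<beta> t < \<beta> s"
  shows "continuous_on {c..\<beta> 0} (betainv \<beta>)"
    and "v \<in> {c..\<beta> 0} \<Longrightarrow> 0 \<le> betainv \<beta> v \<and> \<beta> (betainv \<beta> v) = v"
proof -
  obtain M where M: "0 \<le> M" "{c..\<beta> 0} \<subseteq> \<beta> ` {0..M}"
    using decreasing_levels_attained[OF cont lim c] by blast
  have "inj_on \<beta> {0..}"
    by (rule inj_onI) (metis atLeast_iff dec less_irrefl linorder_neqE_linordered_idom)
  then have left_inv: "\<forall>x\<in>{0..M}. betainv \<beta> (\<beta> x) = x"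
    unfolding betainv_def by (auto intro: the_inv_into_f_f)
  have "continuous_on {0..M} \<beta>" using cont by (rule continuous_on_subset) auto
  then have "continuous_on (\<beta> ` {0..M}) (betainv \<beta>)"
    using compact_Icc left_inv by (rule continuous_on_inv)
  then show "continuous_on {c..\<beta> 0} (betainv \<beta>)" using M(2) by (rule continuous_on_subset)
  show "v \<in> {c..\<beta> 0} \<Longrightarrow> 0 \<le> betainv \<beta> v \<and> \<beta> (betainv \<beta> v) = v"
    using M(2) left_inv by auto
qed

lemma equilibrium_level_bounds:
  fixes \<delta> b \<tau> :: real
  assumes \<delta>: "0 < \<delta>" "\<delta> < b" and \<tau>: "0 \<le> \<tau>" "\<tau> < (1/\<delta>) * ln (2 * b / (\<delta> + b))"
  shows "0 < 2 * exp (-\<delta>*\<tau>) - 1" "\<delta> \<le> \<delta> / (2 * exp (-\<delta>*\<tau>) - 1)"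
    "\<delta> / (2 * exp (-\<delta>*\<tau>) - 1) < b"
proof -
  have "ln ((\<delta> + b) / (2 * b)) = - \<delta> * ((1/\<delta>) * ln (2 * b / (\<delta> + b)))"
    using \<delta> by (simp add: ln_div)
  also have "\<dots> < -\<delta>*\<tau>" using \<tau> \<delta> by (simp add: pos_less_divide_eq mult.commute)
  finally have "(\<delta> + b) / (2 * b) < exp (-\<delta>*\<tau>)"
    using \<delta> by (metis divide_pos_pos exp_less_cancel_iff exp_ln add_pos_pos mult_pos_pos
        order.strict_trans zero_less_numeral)
  then have lower: "\<delta> / b < 2 * exp (-\<delta>*\<tau>) - 1" using \<delta> by (simp add: field_simps)
  moreover have upper: "2 * exp (-\<delta>*\<tau>) - 1 \<le> 1" using \<tau> \<delta> by simp
  moreover have pos: "0 < 2 * exp (-\<delta>*\<tau>) - 1"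
    using lower \<delta> by (smt (verit) divide_pos_pos)
  ultimately show "0 < 2 * exp (-\<delta>*\<tau>) - 1" "\<delta> \<le> \<delta> / (2 * exp (-\<delta>*\<tau>) - 1)"
    "\<delta> / (2 * exp (-\<delta>*\<tau>) - 1) < b" using \<delta> by (simp_all add: field_simps)
qed

lemma coefficients_on_window:
  fixes \<beta> \<beta>' :: "real \<Rightarrow> real" and \<delta> :: real
  assumes delta_pos: "\<delta> > 0" and delta_lt: "\<delta> < \<beta> 0"
    and beta_deriv: "\<forall>s\<ge>0. (\<beta> has_real_derivative \<beta>' s) (at s within {0..})"
    and beta'_cont: "continuous_on {0..} \<beta>'"
    and dec: "\<forall>s t. 0 \<le> s \<and> s < t \<longrightarrow> \<beta> t < \<beta> s"
    and beta_lim: "(\<beta> \<longlongrightarrow> 0) at_top"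
  shows "continuous_on {0..<taubar \<beta> \<delta>} (Acoef \<beta> \<delta>)"
    and "continuous_on {0..<taubar \<beta> \<delta>} (Bcoef \<beta> \<beta>' \<delta>)"
    and "\<tau> \<in> {0..<taubar \<beta> \<delta>} \<Longrightarrow> 0 < Acoef \<beta> \<delta> \<tau>"
proof -
  define W where "W = {0..<taubar \<beta> \<delta>}"
  define y where "y \<tau> = \<delta> / (2 * exp (-\<delta>*\<tau>) - 1)" for \<tau>
  have bcont: "continuous_on {0..} \<beta>"
    using beta_deriv DERIV_continuous by (metis atLeast_iff continuous_on_eq_continuous_within)
  note inv = betainv_on_levels[OF bcont beta_lim delta_pos dec]
  have level: "0 < 2 * exp (-\<delta>*\<tau>) - 1 \<and> y \<tau> \<in> {\<delta>..\<beta> 0}" if "\<tau> \<in> W" for \<tau>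
    using equilibrium_level_bounds[OF delta_pos delta_lt] that
    by (auto simp: W_def y_def taubar_def less_imp_le)
  have S_eq: "Sstar \<beta> \<delta> = betainv \<beta> \<circ> y" by (simp add: fun_eq_iff Sstar_def y_def)
  have "continuous_on W y" unfolding y_def[abs_def] using level by (intro continuous_intros) force
  then have Scont: "continuous_on W (Sstar \<beta> \<delta>)"
    unfolding S_eq using level by (intro continuous_on_compose continuous_on_subset[OF inv(1)]) auto
  have Sval: "0 \<le> Sstar \<beta> \<delta> \<tau> \<and> \<beta> (Sstar \<beta> \<delta> \<tau>) = y \<tau>" if "\<tau> \<in> W" for \<tau>
    using inv(2) level[OF that] by (simp add: S_eq)
  have \<beta>S: "continuous_on W (\<lambda>\<tau>. \<beta> (Sstar \<beta> \<delta> \<tau>))"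
    by (rule continuous_on_compose2[OF bcont Scont]) (use Sval in auto)
  have \<beta>'S: "continuous_on W (\<lambda>\<tau>. \<beta>' (Sstar \<beta> \<delta> \<tau>))"
    by (rule continuous_on_compose2[OF beta'_cont Scont]) (use Sval in auto)
  show "continuous_on {0..<taubar \<beta> \<delta>} (Acoef \<beta> \<delta>)"
    and "continuous_on {0..<taubar \<beta> \<delta>} (Bcoef \<beta> \<beta>' \<delta>)"
    unfolding W_def[symmetric] Acoef_def[abs_def] Bcoef_def[abs_def] Nstar_def
    by (intro continuous_intros \<beta>S \<beta>'S Scont)+
  show "\<tau> \<in> {0..<taubar \<beta> \<delta>} \<Longrightarrow> 0 < Acoef \<beta> \<delta> \<tau>"
    using Sval level delta_pos by (fastforce simp: Acoef_def W_def)
qed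

theorem lemma5p3:
  fixes \<beta> \<beta>' :: "real \<Rightarrow> real" and \<delta> \<tau>s :: real
  assumes delta_pos: "\<delta> > 0"
    and beta_pos: "\<forall>s\<ge>0. \<beta> s > 0"
    and beta_deriv: "\<forall>s\<ge>0. (\<beta> has_real_derivative \<beta>' s) (at s within {0..})"
    and beta'_cont: "continuous_on {0..} \<beta>'"
    and beta_strict_dec: "\<forall>s t. 0 \<le> s \<and> s < t \<longrightarrow> \<beta> t < \<beta> s"
    and beta'_neg: "\<forall>s>0. \<beta>' s < 0"
    and beta_lim: "(\<beta> \<longlongrightarrow> 0) at_top"
    and delta_lt: "\<delta> < \<beta> 0"
    and H1: "\<forall>x y. 0 \<le> x \<and> x \<le> y \<and> y \<le> betainv \<beta> \<delta> \<longrightarrow> y * \<beta>' y \<le> x * \<beta>' x"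
    and H2: "betainv \<beta> \<delta> * \<beta>' (betainv \<beta> \<delta>) < - 4 * \<delta>"
    and taus_range: "0 < \<tau>s" "\<tau>s < taubar \<beta> \<delta>"
    and taus_char: "\<forall>\<tau>\<in>{0..<taubar \<beta> \<delta>}.
        (Acoef \<beta> \<delta> \<tau> < \<bar>Bcoef \<beta> \<beta>' \<delta> \<tau>\<bar> \<and> Bcoef \<beta> \<beta>' \<delta> \<tau> < 0) \<longleftrightarrow> \<tau> < \<tau>s"
  shows "\<forall>k::nat.
      Zk \<beta> \<beta>' \<delta> k 0 < 0
    \<and> filterlim (Zk \<beta> \<beta>' \<delta> k) at_bot (at_left \<tau>s)
    \<and> ((finite {\<tau>\<in>{0..<\<tau>s}. Zk \<beta> \<beta>' \<delta> k \<tau> = 0}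
         \<and> (\<forall>z\<in>{\<tau>\<in>{0..<\<tau>s}. Zk \<beta> \<beta>' \<delta> k \<tau> = 0}. changes_sign_at (Zk \<beta> \<beta>' \<delta> k) z))
        \<longrightarrow> even (card {\<tau>\<in>{0..<\<tau>s}. Zk \<beta> \<beta>' \<delta> k \<tau> = 0}))
    \<and> (\<forall>\<tau>\<in>{0..<\<tau>s}. Zk \<beta> \<beta>' \<delta> (Suc k) \<tau> < Zk \<beta> \<beta>' \<delta> k \<tau>)
    \<and> ((\<forall>\<tau>\<in>{0..<\<tau>s}. Zk \<beta> \<beta>' \<delta> k \<tau> \<noteq> 0)
        \<longrightarrow> (\<forall>j>k. \<forall>\<tau>\<in>{0..<\<tau>s}. Zk \<beta> \<beta>' \<delta> j \<tau> \<noteq> 0))"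
proof -
  define A where "A = Acoef \<beta> \<delta>"
  define B where "B = Bcoef \<beta> \<beta>' \<delta>"
  note coef = coefficients_on_window[OF delta_pos delta_lt beta_deriv beta'_cont beta_strict_dec
      beta_lim, folded A_def B_def]
  have window: "{0..<\<tau>s} \<subseteq> {0..<taubar \<beta> \<delta>}" using taus_range by auto
  have regime: "\<forall>t\<in>{0..<\<tau>s}. 0 < A t \<and> A t < - B t"
    using taus_char coef(3) window unfolding A_def B_def by fastforce
  have "isCont A \<tau>s" "isCont B \<tau>s"
    using coef(1,2) taus_range by (auto intro!: continuous_on_interior simp: interior_atLeastLessThan)
  moreover have "eventually (\<lambda>t. 0 < A t \<and> A t < - B t) (at_left \<tau>s)"
    using eventually_at_left_real[OF taus_range(1)] by eventually_elim (use regime in auto)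
  moreover have "\<not> (A \<tau>s < \<bar>B \<tau>s\<bar> \<and> B \<tau>s < 0)" using taus_char taus_range by (auto simp: A_def B_def)
  ultimately have "((\<lambda>t. (B t)\<^sup>2 - (A t)\<^sup>2) \<longlongrightarrow> 0) (at_left \<tau>s)"
    by (rule discriminant_vanishes_at_exit)
  note gap = delay_gap_properties[OF taus_range(1) continuous_on_subset[OF coef(1) window]
      continuous_on_subset[OF coef(2) window] regime this]
  show ?thesis unfolding Zk_eq_delay_gap A_def[symmetric] B_def[symmetric]
    using gap by blast
qed

end
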